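(* Let $A, E \in \mathbb{R}^{m\times n}$, $b, \epsilon \in \mathbb{R}^m$, and set $\tilde A = A+E$, $\tilde b = b+\epsilon$. Assume the noiseless system $Ax=b$ is consistent and let $x_{\rm LS} = A^\dagger b$. Let $(x_k)_{k\ge0}$ be the iterates of the randomized Kaczmarz algorithm applied to the doubly-noisy system $\tilde A x\approx \tilde b$, with starting point $x_0$ satisfying $x_0 - x_{\rm LS} \in \operatorname{range}(\tilde A^\top)$. Then for every $k\ge 0$, $$\mathbb{E}\|x_k - x_{\rm LS}\|^2 \le \left(1-\frac{1}{\tilde R}\right)^k \|x_0 - x_{\rm LS}\|^2 + \frac{\|E x_{\rm LS} - \epsilon\|^2}{\sigma_{\min}^2(\tilde A)},$$ where $\tilde R = \|\tilde A^\dagger\|^2\,\|\tilde A\|_F^2$.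
   Context: Norms of vectors are Euclidean; $\|M\|$ is the spectral norm, $\|M\|_F$ the Frobenius norm, $M^\dagger$ the Moore–Penrose pseudoinverse, and $\sigma_{\min}(M)$ the smallest nonzero singular value of $M$. The randomized Kaczmarz (RK) algorithm applied to a system $\tilde A x\approx \tilde b$ (with $\tilde A$ having nonzero rows $\tilde a_1^\top,\dots,\tilde a_m^\top$) generates, from a starting point $x_0$, the iterates $x_{k+1} = x_k - \frac{\tilde a_{i(k)}^\top x_k - \tilde b_{i(k)}}{\|\tilde a_{i(k)}\|^2}\tilde a_{i(k)}$, where the indices $i(k)$ are drawn independently with $\Pr[i(k)=i] = \|\tilde a_i\|^2/\|\tilde A\|_F^2$. The expectation is over these random indices. The doubly-noisy system need not be consistent. *)

theory Defs
  imports "HOL-Analysis.Analysis"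
begin

definition pinv :: "real^'n^'m \<Rightarrow> real^'m^'n" where
  "pinv A = (THE X. A ** X ** A = A \<and> X ** A ** X = X \<and>
                    transpose (A ** X) = A ** X \<and> transpose (X ** A) = X ** A)"

definition spec_norm :: "real^'n^'m \<Rightarrow> real" where
  "spec_norm A = onorm (\<lambda>x. A *v x)"

definition frob_norm :: "real^'n^'m \<Rightarrow> real" where
  "frob_norm A = sqrt (\<Sum>i\<in>UNIV. \<Sum>j\<in>UNIV. (A $ i $ j)^2)"

definition sigma_min :: "real^'n^'m \<Rightarrow> real" where
  "sigma_min A = Min {s. s > 0 \<and> (\<exists>v. v \<noteq> 0 \<and> (transpose A ** A) *v v = (s^2) *\<^sub>R v)}"

definition rk_step :: "real^'n^'m \<Rightarrow> real^'m \<Rightarrow> real^'n \<Rightarrow> 'm \<Rightarrow> real^'n" where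
  "rk_step A b x i = x - (((A $ i) \<bullet> x - b $ i) / (norm (A $ i))^2) *\<^sub>R (A $ i)"

definition rk_iter :: "real^'n^'m \<Rightarrow> real^'m \<Rightarrow> real^'n \<Rightarrow> 'm list \<Rightarrow> real^'n" where
  "rk_iter A b x0 is = foldl (rk_step A b) x0 is"

definition rk_prob :: "real^'n^'m \<Rightarrow> 'm \<Rightarrow> real" where
  "rk_prob A i = (norm (A $ i))^2 / (frob_norm A)^2"

text \<open>Expectation of f(x_k) over i.i.d. indices i(0..k-1).\<close>
definition rk_expect :: "real^'n^'m \<Rightarrow> real^'m \<Rightarrow> real^'n \<Rightarrow> nat \<Rightarrow> (real^'n \<Rightarrow> real) \<Rightarrow> real" where
  "rk_expect A b x0 k f =
     (\<Sum>is\<in>{is::'m list. length is = k}. (\<Prod>j<k. rk_prob A (is ! j)) * f (rk_iter A b x0 is))"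

end

theory Submission
  imports Defs
begin

text \<open>One RK step projects the iterate onto the hyperplane of a single row of \<open>At\<close>. The error
  \<open>e = x - xLS\<close> stays in the row space of \<open>At\<close>, and averaging over the chosen row gives exactly
  \<open>\<parallel>e\<parallel>\<^sup>2 - (\<parallel>At e\<parallel>\<^sup>2 - \<parallel>r\<parallel>\<^sup>2) / \<parallel>At\<parallel>\<^sub>F\<^sup>2\<close> for the expected new squared error, where
  \<open>r = bt - At xLS = eps - E xLS\<close> by consistency. On the row space \<open>\<parallel>e\<parallel> \<le> \<parallel>At\<^sup>\<dagger>\<parallel> \<parallel>At e\<parallel>\<close>,
  so every step contracts the squared error by \<open>q = 1 - 1/R\<close> up to the additive term
  \<open>\<parallel>r\<parallel>\<^sup>2 / \<parallel>At\<parallel>\<^sub>F\<^sup>2\<close>. The geometric series bounds the accumulated terms by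
  \<open>R \<parallel>r\<parallel>\<^sup>2 / \<parallel>At\<parallel>\<^sub>F\<^sup>2 = \<parallel>At\<^sup>\<dagger>\<parallel>\<^sup>2 \<parallel>r\<parallel>\<^sup>2\<close>, and \<open>\<parallel>At\<^sup>\<dagger>\<parallel> \<le> 1 / \<sigma>\<^sub>m\<^sub>i\<^sub>n(At)\<close> because
  \<open>\<sigma>\<^sub>m\<^sub>i\<^sub>n \<parallel>At\<^sup>\<dagger> y\<parallel> \<le> \<parallel>At At\<^sup>\<dagger> y\<parallel> \<le> \<parallel>y\<parallel>\<close>.\<close>

lemma norm_add_scaleR_power2:
  fixes p q :: "'a::real_inner"
  shows "(norm (p + t *\<^sub>R q))^2 = (norm p)^2 + 2 * t * (p \<bullet> q) + t^2 * (norm q)^2"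
proof -
  have "(p + t *\<^sub>R q) \<bullet> (p + t *\<^sub>R q) = p \<bullet> p + 2 * t * (p \<bullet> q) + t^2 * (q \<bullet> q)"
    by (simp add: inner_add_left inner_add_right inner_commute power2_eq_square algebra_simps)
  then show ?thesis by (simp only: power2_norm_eq_inner)
qed

section \<open>The row space and orthogonal projections\<close>

abbreviation row_space :: "real^'n^'m \<Rightarrow> (real^'n) set" where
  "row_space A \<equiv> range (\<lambda>y. transpose A *v y)"

lemma subspace_row_space: "subspace (row_space A)"
  by (rule linear_subspace_image[OF matrix_vector_mul_linear subspace_UNIV])

lemma row_in_row_space: "A $ i \<in> row_space A"
proof -
  have "A $ i = transpose A *v axis i 1"
    by (simp add: dot_lmul_matrix euclidean_eqI inner_axis' matrix_vector_mul_component)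
  then show ?thesis by blast
qed

lemma matrix_vector_mult_eq_0_if_orthogonal_row_space:
  fixes A :: "real^'n^'m"
  assumes "\<And>u. u \<in> row_space A \<Longrightarrow> d \<bullet> u = 0"
  shows "A *v d = 0"
proof -
  have "(A *v d) \<bullet> (A *v d) = d \<bullet> (transpose A *v (A *v d))"
    by (metis dot_lmul_matrix inner_commute transpose_matrix_vector)
  also have "\<dots> = 0" using assms by blast
  finally show ?thesis by simp
qed

lemma row_space_eq_0_if_matrix_vector_mult_eq_0:
  fixes A :: "real^'n^'m"
  assumes "d \<in> row_space A" "A *v d = 0"
  shows "d = 0"
proof -
  obtain z where z: "d = transpose A *v z" using assms(1) by blast
  have "d \<bullet> d = z \<bullet> (A *v d)"
    unfolding z by (simp add: dot_lmul_matrix z[symmetric])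
  then show ?thesis using assms(2) by simp
qed

lemma transpose_eq_selfI:
  fixes M :: "real^'n^'n"
  assumes "\<And>x y. (M *v x) \<bullet> y = x \<bullet> (M *v y)"
  shows "transpose M = M"
proof -
  have "transpose M *v x = M *v x" for x
  proof -
    have "(transpose M *v x) \<bullet> y = (M *v x) \<bullet> y" for y
      using assms by (simp add: dot_lmul_matrix)
    then have "(transpose M *v x - M *v x) \<bullet> (transpose M *v x - M *v x) = 0"
      by (simp add: inner_diff_left inner_diff_right)
    then show ?thesis by simp
  qed
  then show ?thesis by (simp add: matrix_eq)
qed

lemma orthogonal_projection_matrix:
  fixes U :: "(real^'n) set"
  assumes U: "subspace U"
  obtains P :: "real^'n^'n"
  where "transpose P = P" "\<And>x. P *v x \<in> U" "\<And>x. x \<in> U \<Longrightarrow> P *v x = x"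
    "\<And>x u. u \<in> U \<Longrightarrow> (x - P *v x) \<bullet> u = 0"
proof -
  obtain B where BU: "B \<subseteq> U" and orth: "pairwise orthogonal B" and B1: "\<And>x. x \<in> B \<Longrightarrow> norm x = 1"
    and ind: "independent B" and spB: "span B = U"
    using orthonormal_basis_subspace[OF U] by metis
  have fin: "finite B" using ind independent_imp_finite by blast
  define p where "p x = (\<Sum>b\<in>B. (b \<bullet> x) *\<^sub>R b)" for x :: "real^'n"
  have "linear p" unfolding p_def
    by (intro linearI) (auto simp: inner_add_right scaleR_add_left sum.distrib scaleR_sum_right)
  then have Pp: "matrix p *v x = p x" for x
    using matrix_works linear_matrix_vector_mul_eq by metis
  have bb: "b \<bullet> c = (if b = c then 1 else 0)" if "b \<in> B" "c \<in> B" for b c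
    using orth B1 that by (auto simp: pairwise_def orthogonal_def norm_eq_1)
  have pB: "p x \<bullet> c = x \<bullet> c" if c: "c \<in> B" for x c
  proof -
    have "p x \<bullet> c = (\<Sum>b\<in>B. (b \<bullet> x) * (b \<bullet> c))" unfolding p_def by (simp add: inner_sum_left)
    also have "\<dots> = (\<Sum>b\<in>B. if b = c then c \<bullet> x else 0)"
      by (rule sum.cong) (auto simp: bb c)
    also have "\<dots> = x \<bullet> c" using fin c by (simp add: inner_commute)
    finally show ?thesis .
  qed
  have perp: "(x - p x) \<bullet> u = 0" if u: "u \<in> U" for x u
  proof -
    have "orthogonal (x - p x) u"
      by (rule orthogonal_to_span[of u B]) (use u spB pB in \<open>auto simp: orthogonal_def inner_diff_left\<close>)
    then show ?thesis by (simp add: orthogonal_def)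
  qed
  have inU: "p x \<in> U" for x
    unfolding p_def using BU U by (intro subspace_sum subspace_scale) auto
  have fixU: "p x = x" if x: "x \<in> U" for x
  proof -
    have "x - p x \<in> U" using x inU U by (simp add: subspace_diff)
    then have "(x - p x) \<bullet> (x - p x) = 0" using perp by blast
    then show ?thesis by simp
  qed
  have "transpose (matrix p) = matrix p"
    by (rule transpose_eq_selfI)
      (simp add: Pp p_def inner_sum_left inner_sum_right inner_commute mult.commute)
  with that show ?thesis using Pp inU fixU perp by metis
qed

section \<open>The Moore--Penrose pseudoinverse\<close>

definition penrose :: "real^'n^'m \<Rightarrow> real^'m^'n \<Rightarrow> bool" where
  "penrose A X \<longleftrightarrow> A ** X ** A = A \<and> X ** A ** X = X \<and>
                    transpose (A ** X) = A ** X \<and> transpose (X ** A) = X ** A"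

lemma penrose_unique:
  assumes "penrose A X" "penrose A Y"
  shows "X = Y"
proof -
  let ?T = transpose
  from assms have a1: "A ** X ** A = A" "X ** A ** X = X" "?T (A ** X) = A ** X" "?T (X ** A) = X ** A"
    and a2: "A ** Y ** A = A" "Y ** A ** Y = Y" "?T (A ** Y) = A ** Y" "?T (Y ** A) = Y ** A"
    by (auto simp: penrose_def)
  have tAY: "?T A = ?T A ** ?T Y ** ?T A"
    by (metis a2(1) matrix_transpose_mul matrix_mul_assoc)
  have tAX: "?T A = ?T A ** ?T X ** ?T A"
    by (metis a1(1) matrix_transpose_mul matrix_mul_assoc)
  have "X = X ** (A ** X)" using a1(2) by (simp add: matrix_mul_assoc)
  also have "\<dots> = X ** ?T X ** ?T A" using a1(3) by (metis matrix_transpose_mul matrix_mul_assoc)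
  also have "\<dots> = X ** ?T X ** (?T A ** ?T Y ** ?T A)" using tAY by simp
  also have "\<dots> = X ** (?T X ** ?T A) ** (?T Y ** ?T A)" by (simp add: matrix_mul_assoc)
  also have "\<dots> = X ** (A ** X) ** (A ** Y)" using a1(3) a2(3) by (metis matrix_transpose_mul)
  also have "\<dots> = (X ** A ** X) ** A ** Y" by (simp add: matrix_mul_assoc)
  also have "\<dots> = X ** A ** Y" using a1(2) by simp
  finally have X: "X = X ** A ** Y" .
  have "Y = (Y ** A) ** Y" using a2(2) by simp
  also have "\<dots> = ?T A ** ?T Y ** Y" using a2(4) by (metis matrix_transpose_mul)
  also have "\<dots> = (?T A ** ?T X ** ?T A) ** ?T Y ** Y" using tAX by simp
  also have "\<dots> = (?T A ** ?T X) ** (?T A ** ?T Y) ** Y" by (simp add: matrix_mul_assoc)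
  also have "\<dots> = (X ** A) ** (Y ** A) ** Y" using a1(4) a2(4) by (metis matrix_transpose_mul)
  also have "\<dots> = X ** A ** (Y ** A ** Y)" by (simp add: matrix_mul_assoc)
  also have "\<dots> = X ** A ** Y" using a2(2) by simp
  finally show ?thesis using X by simp
qed

lemma matrix_left_inverse_on_row_space:
  fixes A :: "real^'n^'m"
  obtains G :: "real^'m^'n"
  where "\<And>y. G *v y \<in> row_space A" "\<And>e. e \<in> row_space A \<Longrightarrow> G *v (A *v e) = e"
proof -
  have "inj_on (\<lambda>x. A *v x) (row_space A)"
  proof (rule inj_onI)
    fix v w assume vw: "v \<in> row_space A" "w \<in> row_space A" "A *v v = A *v w"
    have "v - w \<in> row_space A" using subspace_diff[OF subspace_row_space vw(1,2)] .
    moreover have "A *v (v - w) = 0" using vw(3) by (simp add: matrix_vector_mult_diff_distrib)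
    ultimately show "v = w" using row_space_eq_0_if_matrix_vector_mult_eq_0 by force
  qed
  then obtain g where g: "range g \<subseteq> row_space A" "linear g" "\<And>e. e \<in> row_space A \<Longrightarrow> g (A *v e) = e"
    using linear_exists_left_inverse_on[OF matrix_vector_mul_linear subspace_row_space] by metis
  have "matrix g *v y = g y" for y
    using g(2) matrix_works linear_matrix_vector_mul_eq by metis
  with g that show ?thesis by (metis range_subsetD)
qed

lemma penrose_exists: "\<exists>X. penrose A X"
proof -
  let ?V = "row_space A" and ?W = "range (\<lambda>x. A *v x)"
  obtain PV where PV: "transpose PV = PV" "\<And>x. PV *v x \<in> ?V" "\<And>x. x \<in> ?V \<Longrightarrow> PV *v x = x"
      "\<And>x u. u \<in> ?V \<Longrightarrow> (x - PV *v x) \<bullet> u = 0"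
    using orthogonal_projection_matrix[OF subspace_row_space] by metis
  obtain PW where PW: "transpose PW = PW" "\<And>y. PW *v y \<in> ?W" "\<And>y. y \<in> ?W \<Longrightarrow> PW *v y = y"
    using orthogonal_projection_matrix[OF linear_subspace_image[OF matrix_vector_mul_linear subspace_UNIV]]
    by metis
  obtain G where G: "\<And>y. G *v y \<in> ?V" "\<And>e. e \<in> ?V \<Longrightarrow> G *v (A *v e) = e"
    using matrix_left_inverse_on_row_space by metis
  have A_PV: "A *v (PV *v x) = A *v x" for x
    using matrix_vector_mult_eq_0_if_orthogonal_row_space[of A "x - PV *v x"] PV(4)
    by (simp add: matrix_vector_mult_diff_distrib)
  define X where "X = G ** PW"
  have GA: "G *v (A *v x) = PV *v x" for x
    using G(2)[OF PV(2)] A_PV by metis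
  have AX: "A ** X = PW"
  proof (rule iffD2[OF matrix_eq], rule allI)
    fix y
    obtain x where x: "PW *v y = A *v x" using PW(2) by blast
    show "(A ** X) *v y = PW *v y"
      by (simp add: X_def x GA A_PV flip: matrix_vector_mul_assoc)
  qed
  have XA: "X ** A = PV"
    by (simp add: matrix_eq X_def GA PW(3) flip: matrix_vector_mul_assoc)
  have "A ** X ** A = A"
    by (simp add: matrix_eq AX PW(3) flip: matrix_vector_mul_assoc)
  moreover have "X ** A ** X = X"
    unfolding matrix_eq XA using G(1) PV(3) by (simp add: X_def flip: matrix_vector_mul_assoc)
  ultimately have "penrose A X" using AX XA PV(1) PW(1) unfolding penrose_def by simp
  then show ?thesis ..
qed

lemma penrose_pinv: "penrose A (pinv A)"
proof -
  obtain X where X: "penrose A X" using penrose_exists by blast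
  have "pinv A = X" unfolding pinv_def
    by (rule the_equality) (use X penrose_unique in \<open>auto simp: penrose_def\<close>)
  then show ?thesis using X by simp
qed

lemma pinv_mult_row_space:
  fixes A :: "real^'n^'m"
  assumes "e \<in> row_space A"
  shows "pinv A *v (A *v e) = e"
proof -
  obtain z where z: "e = transpose A *v z" using assms by blast
  have p: "A ** pinv A ** A = A" "transpose (pinv A ** A) = pinv A ** A"
    using penrose_pinv[of A] by (auto simp: penrose_def)
  have "pinv A *v (A *v e) = transpose (pinv A ** A) *v (transpose A *v z)"
    unfolding z p(2) by (simp only: matrix_vector_mul_assoc matrix_mul_assoc)
  also have "\<dots> = transpose (A ** pinv A ** A) *v z"
    by (simp only: matrix_vector_mul_assoc matrix_transpose_mul matrix_mul_assoc)
  finally show ?thesis using z p(1) by simp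
qed

lemma pinv_mult_in_row_space: "pinv A *v y \<in> row_space A"
proof -
  have p: "pinv A ** A ** pinv A = pinv A" "transpose (pinv A ** A) = pinv A ** A"
    using penrose_pinv[of A] by (auto simp: penrose_def)
  have "pinv A *v y = (transpose (pinv A ** A) ** pinv A) *v y"
    using p by simp
  also have "\<dots> = transpose A *v ((transpose (pinv A) ** pinv A) *v y)"
    by (simp only: matrix_transpose_mul matrix_vector_mul_assoc matrix_mul_assoc)
  finally show ?thesis by blast
qed

lemma mult_pinv_mult: "A *v (pinv A *v (A *v x)) = A *v x"
proof -
  have "A ** pinv A ** A = A" using penrose_pinv[of A] by (simp add: penrose_def)
  then show ?thesis by (metis matrix_vector_mul_assoc)
qed

lemma norm_symmetric_idempotent_le:
  fixes P :: "real^'n^'n"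
  assumes "transpose P = P" "P ** P = P"
  shows "norm (P *v y) \<le> norm y"
proof -
  have "norm (P *v y) * norm (P *v y) = (P *v y) \<bullet> (P *v y)"
    by (simp add: dot_square_norm power2_eq_square)
  also have "\<dots> = y \<bullet> (P *v (P *v y))"
    by (metis assms(1) dot_lmul_matrix transpose_matrix_vector)
  also have "\<dots> = y \<bullet> (P *v y)" by (simp add: matrix_vector_mul_assoc assms(2))
  also have "\<dots> \<le> norm y * norm (P *v y)" by (rule norm_cauchy_schwarz)
  finally show ?thesis
    by (cases "P *v y = 0") (auto simp: mult_le_cancel_right)
qed

lemma norm_mult_pinv_le: "norm (A *v (pinv A *v y)) \<le> norm y"
proof -
  have "transpose (A ** pinv A) = A ** pinv A" "(A ** pinv A) ** (A ** pinv A) = A ** pinv A"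
    using penrose_pinv[of A] by (auto simp: penrose_def matrix_mul_assoc)
  then show ?thesis
    using norm_symmetric_idempotent_le by (metis matrix_vector_mul_assoc)
qed

section \<open>The smallest singular value\<close>

abbreviation pos_singular_values :: "real^'n^'m \<Rightarrow> real set" where
  "pos_singular_values A \<equiv> {s. s > 0 \<and> (\<exists>v. v \<noteq> 0 \<and> (transpose A ** A) *v v = (s^2) *\<^sub>R v)}"

lemma inner_gram_matrix:
  fixes A :: "real^'n^'m"
  shows "((transpose A ** A) *v u) \<bullet> w = (A *v u) \<bullet> (A *v w)"
proof -
  have "(transpose A ** A) *v u = (A *v u) v* A" by (simp flip: matrix_vector_mul_assoc)
  then show ?thesis by (simp add: dot_lmul_matrix)
qed

text \<open>Eigenvectors of the symmetric matrix \<open>A\<^sup>T A\<close> for distinct eigenvalues are orthogonal,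
  and a pairwise orthogonal set of vectors is finite.\<close>
lemma finite_pos_singular_values: "finite (pos_singular_values A)"
proof -
  let ?S = "pos_singular_values A" and ?M = "transpose A ** A"
  define v where "v s = (SOME v. v \<noteq> 0 \<and> ?M *v v = (s^2) *\<^sub>R v)" for s
  have v: "v s \<noteq> 0" "?M *v v s = (s^2) *\<^sub>R v s" if "s \<in> ?S" for s
    using someI_ex[of "\<lambda>v. v \<noteq> 0 \<and> ?M *v v = (s^2) *\<^sub>R v"] that unfolding v_def by auto
  have orth: "(v s) \<bullet> (v t) = 0" if "s \<in> ?S" "t \<in> ?S" "s \<noteq> t" for s t
  proof -
    have "s^2 * (v s \<bullet> v t) = (A *v v s) \<bullet> (A *v v t)"
      using v[OF that(1)] inner_gram_matrix[of A "v s" "v t"] by simp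
    also have "\<dots> = t^2 * (v s \<bullet> v t)"
      using v[OF that(2)] inner_gram_matrix[of A "v t" "v s"] by (simp add: inner_commute)
    finally have "(s^2 - t^2) * (v s \<bullet> v t) = 0" by (simp add: algebra_simps)
    moreover have "s^2 \<noteq> t^2" using that by (simp add: power2_eq_iff)
    ultimately show ?thesis by simp
  qed
  have inj: "inj_on v ?S"
  proof (rule inj_onI, rule ccontr)
    fix s t assume st: "s \<in> ?S" "t \<in> ?S" "v s = v t" "s \<noteq> t"
    then have "v s \<bullet> v s = 0" using orth[of s t] by simp
    with v(1)[OF st(1)] show False by simp
  qed
  have "pairwise orthogonal (v ` ?S)"
    unfolding pairwise_def orthogonal_def using orth by blast
  then have "finite (v ` ?S)" by (rule pairwise_orthogonal_imp_finite)
  then show ?thesis using finite_imageD inj by blast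
qed

lemma linear_coeff_eq_0_if_quadratic_nonneg:
  fixes b c :: real
  assumes "\<And>t. 0 \<le> 2 * b * t + c * t^2"
  shows "b = 0"
proof -
  define k where "k = \<bar>c\<bar> + 1"
  have k: "k > 0" unfolding k_def by simp
  have "0 \<le> 2 * b * (-b/k) + c * (-b/k)^2" by (rule assms)
  then have "0 \<le> (2 * b * (-b/k) + c * (-b/k)^2) * k^2" by simp
  also have "\<dots> = b^2 * (c - 2 * k)" using k by (simp add: field_simps power2_eq_square)
  finally have "0 \<le> b^2 * (c - 2 * k)" .
  moreover have "c - 2 * k < 0" unfolding k_def by (simp add: abs_if)
  ultimately have "b^2 \<le> 0" by (simp add: mult_le_0_iff zero_le_mult_iff)
  then show ?thesis by simp
qed

lemma row_space_rayleigh_minimizer: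
  fixes A :: "real^'n^'m"
  assumes "row_space A \<noteq> {0}"
  obtains u where "u \<in> row_space A" "norm u = 1"
    "\<And>e. e \<in> row_space A \<Longrightarrow> (norm (A *v u))^2 * (norm e)^2 \<le> (norm (A *v e))^2"
proof -
  let ?K = "row_space A \<inter> sphere 0 1"
  have unit: "(1 / norm e) *\<^sub>R e \<in> ?K" if "e \<in> row_space A" "e \<noteq> 0" for e
    using subspace_scale[OF subspace_row_space that(1)] that(2) by simp
  have "compact ?K"
    by (intro closed_Int_compact closed_subspace subspace_row_space compact_sphere)
  moreover have "?K \<noteq> {}"
  proof -
    obtain e where "e \<in> row_space A" "e \<noteq> 0"
      using assms subspace_0[OF subspace_row_space] by blast
    then show ?thesis using unit by blast
  qed
  moreover have "continuous_on ?K (\<lambda>e. (norm (A *v e))^2)"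
    by (intro continuous_intros)
  ultimately obtain u where u: "u \<in> ?K" "\<And>e. e \<in> ?K \<Longrightarrow> (norm (A *v u))^2 \<le> (norm (A *v e))^2"
    using continuous_attains_inf by metis
  have "(norm (A *v u))^2 * (norm e)^2 \<le> (norm (A *v e))^2" if e: "e \<in> row_space A" for e
  proof (cases "e = 0")
    case False
    have "(norm (A *v u))^2 \<le> (norm (A *v ((1 / norm e) *\<^sub>R e)))^2"
      using u(2) unit[OF e False] by blast
    also have "\<dots> = (norm (A *v e))^2 / (norm e)^2"
      by (simp add: matrix_vector_mult_scaleR power_divide)
    finally show ?thesis using False by (simp add: field_simps)
  qed simp
  moreover have "u \<in> row_space A" "norm u = 1" using u(1) by auto
  ultimately show ?thesis using that by blast
qed

text \<open>First-order optimality of the Rayleigh quotient in every direction \<open>w\<close> of the row space.\<close>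
lemma rayleigh_minimizer_eigenvector:
  fixes A :: "real^'n^'m" and u :: "real^'n"
  defines "\<mu> \<equiv> (norm (A *v u))^2"
  assumes u: "u \<in> row_space A" "norm u = 1"
    and min: "\<And>e. e \<in> row_space A \<Longrightarrow> \<mu> * (norm e)^2 \<le> (norm (A *v e))^2"
  shows "(transpose A ** A) *v u = \<mu> *\<^sub>R u"
proof -
  let ?d = "(transpose A ** A) *v u - \<mu> *\<^sub>R u"
  have orth: "?d \<bullet> w = 0" if w: "w \<in> row_space A" for w
  proof -
    define b where "b = (A *v u) \<bullet> (A *v w) - \<mu> * (u \<bullet> w)"
    define c where "c = (norm (A *v w))^2 - \<mu> * (norm w)^2"
    have "0 \<le> 2 * b * t + c * t^2" for t
    proof -
      have uw: "u + t *\<^sub>R w \<in> row_space A"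
        by (rule subspace_add[OF subspace_row_space u(1) subspace_scale[OF subspace_row_space w]])
      have "\<mu> * (norm (u + t *\<^sub>R w))^2 \<le> (norm (A *v u + t *\<^sub>R (A *v w)))^2"
        using min[OF uw] by (simp only: matrix_vector_right_distrib matrix_vector_mult_scaleR)
      then have "\<mu> * (1 + 2 * t * (u \<bullet> w) + t^2 * (norm w)^2)
          \<le> \<mu> + 2 * t * ((A *v u) \<bullet> (A *v w)) + t^2 * (norm (A *v w))^2"
        unfolding norm_add_scaleR_power2 u(2) \<mu>_def by simp
      moreover have "2 * b * t + c * t^2
          = (\<mu> + 2 * t * ((A *v u) \<bullet> (A *v w)) + t^2 * (norm (A *v w))^2)
            - \<mu> * (1 + 2 * t * (u \<bullet> w) + t^2 * (norm w)^2)"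
        unfolding b_def c_def by (simp add: algebra_simps)
      ultimately show ?thesis by linarith
    qed
    then have "b = 0" by (rule linear_coeff_eq_0_if_quadratic_nonneg)
    then show ?thesis by (simp add: b_def inner_diff_left inner_gram_matrix)
  qed
  have "(transpose A ** A) *v u \<in> row_space A"
    unfolding matrix_vector_mul_assoc[symmetric] by (rule rangeI)
  then have "?d \<in> row_space A"
    by (rule subspace_diff[OF subspace_row_space _ subspace_scale[OF subspace_row_space u(1)]])
  then have "?d \<bullet> ?d = 0" by (rule orth)
  then show ?thesis by simp
qed

lemma pos_singular_value_lower_bound:
  fixes A :: "real^'n^'m"
  assumes "row_space A \<noteq> {0}"
  obtains s where "s \<in> pos_singular_values A"
    "\<And>e. e \<in> row_space A \<Longrightarrow> s^2 * (norm e)^2 \<le> (norm (A *v e))^2"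
proof -
  obtain u where u: "u \<in> row_space A" "norm u = 1"
    and min: "\<And>e. e \<in> row_space A \<Longrightarrow> (norm (A *v u))^2 * (norm e)^2 \<le> (norm (A *v e))^2"
    using row_space_rayleigh_minimizer[OF assms] by blast
  have "A *v u \<noteq> 0" "u \<noteq> 0"
    using row_space_eq_0_if_matrix_vector_mult_eq_0[OF u(1)] u(2) by auto
  moreover have "(transpose A ** A) *v u = (norm (A *v u))^2 *\<^sub>R u"
    by (rule rayleigh_minimizer_eigenvector[OF u min])
  ultimately have "norm (A *v u) \<in> pos_singular_values A" by auto
  then show ?thesis using min by (rule that)
qed

lemma sigma_min_pos:
  assumes "row_space A \<noteq> {0}"
  shows "sigma_min A > 0"
proof -
  obtain s where "s \<in> pos_singular_values A"
    by (rule pos_singular_value_lower_bound[OF assms])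
  then have "pos_singular_values A \<noteq> {}" by blast
  then have "sigma_min A \<in> pos_singular_values A"
    unfolding sigma_min_def by (rule Min_in[OF finite_pos_singular_values])
  then show ?thesis by simp
qed

lemma sigma_min_power2_mult_le:
  fixes A :: "real^'n^'m"
  assumes e: "e \<in> row_space A"
  shows "(sigma_min A)^2 * (norm e)^2 \<le> (norm (A *v e))^2"
proof (cases "row_space A = {0}")
  case False
  show ?thesis
  proof (rule pos_singular_value_lower_bound[OF False])
    fix s assume s: "s \<in> pos_singular_values A"
      and bound: "\<And>e. e \<in> row_space A \<Longrightarrow> s^2 * (norm e)^2 \<le> (norm (A *v e))^2"
    have "sigma_min A \<le> s"
      unfolding sigma_min_def using finite_pos_singular_values s by (rule Min_le)
    then have "(sigma_min A)^2 \<le> s^2"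
      using sigma_min_pos[OF False] by (intro power_mono) auto
    then show ?thesis using bound[OF e] by (meson mult_right_mono order_trans zero_le_power2)
  qed
qed (use e in simp)

section \<open>Norm estimates\<close>

lemma norm_le_spec_norm_pinv_mult:
  assumes "e \<in> row_space A"
  shows "norm e \<le> spec_norm (pinv A) * norm (A *v e)"
  using onorm[OF matrix_vector_mul_bounded_linear, of "pinv A" "A *v e"]
  unfolding spec_norm_def pinv_mult_row_space[OF assms] .

lemma spec_norm_pinv_le:
  assumes "sigma_min A > 0"
  shows "spec_norm (pinv A) \<le> 1 / sigma_min A"
  unfolding spec_norm_def
proof (rule onorm_le)
  fix y
  have "(sigma_min A * norm (pinv A *v y))^2 \<le> (norm (A *v (pinv A *v y)))^2"
    using sigma_min_power2_mult_le[OF pinv_mult_in_row_space] by (simp add: power_mult_distrib)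
  also have "\<dots> \<le> (norm y)^2"
    using norm_mult_pinv_le by (simp add: power_mono)
  finally have "sigma_min A * norm (pinv A *v y) \<le> norm y"
    by (rule power2_le_imp_le) simp
  then show "norm (pinv A *v y) \<le> 1 / sigma_min A * norm y"
    using assms by (simp add: field_simps)
qed

lemma power2_norm_vec: "(norm (v::real^'n))^2 = (\<Sum>i\<in>UNIV. (v $ i)^2)"
  unfolding power2_norm_eq_inner inner_vec_def by (simp add: power2_eq_square)

lemma frob_norm_power2: "(frob_norm A)^2 = (\<Sum>i\<in>UNIV. (norm (A $ i))^2)"
proof -
  have "0 \<le> (\<Sum>i\<in>UNIV. \<Sum>j\<in>UNIV. (A $ i $ j)^2)" by (intro sum_nonneg) auto
  then show ?thesis unfolding frob_norm_def by (simp add: power2_norm_vec)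
qed

lemma frob_norm_nonneg: "0 \<le> frob_norm A"
  unfolding frob_norm_def by (intro real_sqrt_ge_zero sum_nonneg) auto

lemma norm_matrix_vector_mult_le_frob_norm: "norm (A *v e) \<le> frob_norm A * norm e"
proof -
  have "(norm (A *v e))^2 = (\<Sum>i\<in>UNIV. ((A $ i) \<bullet> e)^2)"
    by (simp add: power2_norm_vec matrix_vector_mul_component)
  also have "\<dots> \<le> (\<Sum>i\<in>UNIV. (norm (A $ i) * norm e)^2)"
    by (intro sum_mono) (metis Cauchy_Schwarz_ineq2 abs_ge_zero power2_abs power_mono)
  also have "\<dots> = (frob_norm A * norm e)^2"
    by (simp add: frob_norm_power2 power_mult_distrib sum_distrib_right)
  finally show ?thesis
    by (rule power2_le_imp_le) (simp add: frob_norm_nonneg)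
qed

lemma one_le_spec_norm_pinv_mult_frob_norm:
  assumes "A $ i \<noteq> 0"
  shows "1 \<le> spec_norm (pinv A) * frob_norm A"
proof -
  have "0 \<le> spec_norm (pinv A)"
    unfolding spec_norm_def by (rule onorm_pos_le[OF matrix_vector_mul_bounded_linear])
  then have "norm (A $ i) \<le> spec_norm (pinv A) * (frob_norm A * norm (A $ i))"
    using norm_le_spec_norm_pinv_mult[OF row_in_row_space]
      mult_left_mono[OF norm_matrix_vector_mult_le_frob_norm] order_trans by blast
  then show ?thesis using assms by (simp add: mult.assoc[symmetric])
qed

text \<open>No hypothesis on \<open>A\<close> is needed: if \<open>\<parallel>A\<^sup>\<dagger>\<parallel>\<close> or \<open>\<parallel>A\<parallel>\<^sub>F\<close> vanishes, the quotients
  are \<open>x / 0 = 0\<close>.\<close>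
lemma row_space_contraction:
  fixes A :: "real^'n^'m"
  assumes "e \<in> row_space A"
  shows "(norm e)^2 - (norm (A *v e))^2 / (frob_norm A)^2
    \<le> (1 - 1 / ((spec_norm (pinv A))^2 * (frob_norm A)^2)) * (norm e)^2"
proof -
  let ?s = "spec_norm (pinv A)" and ?F = "frob_norm A"
  have sq: "(norm e)^2 \<le> ?s^2 * (norm (A *v e))^2"
    using norm_le_spec_norm_pinv_mult[OF assms]
    by (metis norm_ge_zero power_mono power_mult_distrib)
  have "(norm e)^2 / (?s^2 * ?F^2) \<le> (norm (A *v e))^2 / ?F^2"
  proof (cases "?s = 0")
    case False
    have "(norm e)^2 / (?s^2 * ?F^2) \<le> ?s^2 * (norm (A *v e))^2 / (?s^2 * ?F^2)"
      by (rule divide_right_mono[OF sq]) simp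
    also have "\<dots> = (norm (A *v e))^2 / ?F^2" using False by simp
    finally show ?thesis .
  qed simp
  moreover have "(1 - 1 / (?s^2 * ?F^2)) * (norm e)^2 = (norm e)^2 - (norm e)^2 / (?s^2 * ?F^2)"
    by (simp add: algebra_simps)
  ultimately show ?thesis by linarith
qed

section \<open>Randomized Kaczmarz\<close>

lemma rk_expect_0: "rk_expect A b x 0 f = f x"
proof -
  have "{is::'m list. length is = 0} = {[]}" by auto
  then show ?thesis unfolding rk_expect_def rk_iter_def by simp
qed

lemma rk_expect_Suc:
  "rk_expect A b x (Suc k) f = (\<Sum>i\<in>UNIV. rk_prob A i * rk_expect A b (rk_step A b x i) k f)"
proof -
  have S: "{is::'m list. length is = Suc k} = (\<lambda>(i, xs). i # xs) ` (UNIV \<times> {xs. length xs = k})"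
    by (auto simp: length_Suc_conv image_iff)
  have inj: "inj_on (\<lambda>(i, xs). i # xs) (UNIV \<times> {xs::'m list. length xs = k})"
    by (auto simp: inj_on_def)
  have "rk_expect A b x (Suc k) f
      = (\<Sum>(i, xs)\<in>UNIV \<times> {xs. length xs = k}.
           (\<Prod>j<Suc k. rk_prob A ((i # xs) ! j)) * f (rk_iter A b x (i # xs)))"
    unfolding rk_expect_def S by (subst sum.reindex[OF inj]) (simp add: case_prod_unfold)
  also have "\<dots> = (\<Sum>i\<in>UNIV. \<Sum>xs\<in>{xs. length xs = k}.
           (\<Prod>j<Suc k. rk_prob A ((i # xs) ! j)) * f (rk_iter A b x (i # xs)))"
    by (rule sum.cartesian_product[symmetric])
  also have "\<dots> = (\<Sum>i\<in>UNIV. rk_prob A i * rk_expect A b (rk_step A b x i) k f)"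
    unfolding rk_expect_def rk_iter_def prod.lessThan_Suc_shift
    by (simp add: sum_distrib_left mult.assoc)
  finally show ?thesis .
qed

lemma frob_norm_power2_pos:
  assumes "A $ i \<noteq> 0"
  shows "(frob_norm A)^2 > 0"
proof -
  have "(norm (A $ i))^2 \<le> (\<Sum>j\<in>UNIV. (norm (A $ j))^2)" by (rule member_le_sum) auto
  moreover have "0 < (norm (A $ i))^2" using assms by simp
  ultimately show ?thesis unfolding frob_norm_power2 by linarith
qed

lemma sum_rk_prob:
  assumes "A $ i \<noteq> 0"
  shows "(\<Sum>j\<in>UNIV. rk_prob A j) = 1"
  using frob_norm_power2_pos[OF assms]
  unfolding rk_prob_def by (simp add: frob_norm_power2 flip: sum_divide_distrib)

lemma rk_step_minus_in_row_space:
  assumes "x - z \<in> row_space A"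
  shows "rk_step A b x i - z \<in> row_space A"
proof -
  have "rk_step A b x i - z = (x - z) - (((A $ i) \<bullet> x - b $ i) / (norm (A $ i))^2) *\<^sub>R (A $ i)"
    unfolding rk_step_def by (simp add: algebra_simps)
  also have "\<dots> \<in> row_space A"
    by (rule subspace_diff[OF subspace_row_space assms subspace_scale[OF subspace_row_space row_in_row_space]])
  finally show ?thesis .
qed

text \<open>The projection onto the hyperplane of row \<open>i\<close> moves the error \<open>x - z\<close> along \<open>a = A $ i\<close>;
  writing \<open>r = (b - A z) $ i\<close> the new squared error is
  \<open>\<parallel>x - z\<parallel>\<^sup>2 + (r\<^sup>2 - (a \<bullet> (x - z))\<^sup>2) / \<parallel>a\<parallel>\<^sup>2\<close>, and the weight \<open>\<parallel>a\<parallel>\<^sup>2\<close> of \<open>rk_prob\<close> clears the denominator.\<close>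
lemma rk_prob_mult_step_error:
  fixes A :: "real^'n^'m" and x z :: "real^'n"
  assumes "A $ i \<noteq> 0"
  shows "rk_prob A i * (norm (rk_step A b x i - z))^2
     = ((norm (A $ i))^2 * (norm (x - z))^2 + ((b - A *v z) $ i)^2 - ((A *v (x - z)) $ i)^2)
       / (frob_norm A)^2"
proof -
  define a where "a = A $ i"
  define e where "e = x - z"
  define r where "r = b $ i - a \<bullet> z"
  define c where "c = (a \<bullet> e - r) / (a \<bullet> a)"
  have aa: "a \<bullet> a > 0" using assms unfolding a_def by simp
  have step: "rk_step A b x i - z = e - c *\<^sub>R a"
    unfolding rk_step_def c_def e_def r_def a_def[symmetric]
    by (simp add: power2_norm_eq_inner inner_diff_right)
  have N: "(norm (e - c *\<^sub>R a))^2 = e \<bullet> e - 2 * c * (e \<bullet> a) + c^2 * (a \<bullet> a)"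
    using norm_add_scaleR_power2[of e "- c" a] by (simp add: power2_norm_eq_inner)
  have "(a \<bullet> a) * (norm (e - c *\<^sub>R a))^2
      = (a \<bullet> a) * (e \<bullet> e) - 2 * ((a \<bullet> a) * c) * (a \<bullet> e) + ((a \<bullet> a) * c)^2"
    unfolding N by (simp add: inner_commute power2_eq_square algebra_simps)
  also have "(a \<bullet> a) * c = a \<bullet> e - r"
    using aa by (simp add: c_def)
  also have "(a \<bullet> a) * (e \<bullet> e) - 2 * (a \<bullet> e - r) * (a \<bullet> e) + (a \<bullet> e - r)^2
      = (a \<bullet> a) * (e \<bullet> e) + r^2 - (a \<bullet> e)^2"
    by (simp add: power2_eq_square algebra_simps)
  finally show ?thesis
    unfolding rk_prob_def step
    by (simp add: a_def e_def r_def power2_norm_eq_inner matrix_vector_mul_component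
        inner_diff_right)
qed

lemma expected_rk_step_error:
  fixes A :: "real^'n^'m"
  assumes rows: "\<And>i. A $ i \<noteq> 0"
  shows "(\<Sum>i\<in>UNIV. rk_prob A i * (norm (rk_step A b x i - z))^2)
    = (norm (x - z))^2 + ((norm (b - A *v z))^2 - (norm (A *v (x - z)))^2) / (frob_norm A)^2"
proof -
  have F: "(frob_norm A)^2 > 0" using frob_norm_power2_pos rows by blast
  have "(\<Sum>i\<in>UNIV. rk_prob A i * (norm (rk_step A b x i - z))^2)
      = (\<Sum>i\<in>UNIV. ((norm (A $ i))^2 * (norm (x - z))^2 + ((b - A *v z) $ i)^2
          - ((A *v (x - z)) $ i)^2) / (frob_norm A)^2)"
    using rk_prob_mult_step_error[OF rows] by simp
  also have "\<dots> = ((\<Sum>i\<in>UNIV. (norm (A $ i))^2) * (norm (x - z))^2 + (\<Sum>i\<in>UNIV. ((b - A *v z) $ i)^2)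
      - (\<Sum>i\<in>UNIV. ((A *v (x - z)) $ i)^2)) / (frob_norm A)^2"
    by (simp add: sum_divide_distrib[symmetric] sum.distrib sum_subtractf sum_distrib_right)
  also have "\<dots> = (norm (x - z))^2 + ((norm (b - A *v z))^2 - (norm (A *v (x - z)))^2) / (frob_norm A)^2"
    unfolding frob_norm_power2[symmetric] power2_norm_vec[symmetric] using F by (simp add: field_simps)
  finally show ?thesis .
qed

lemma rk_expect_le_geometric:
  fixes A :: "real^'n^'m" and q :: real
  assumes rows: "\<And>i. A $ i \<noteq> 0"
    and q: "0 \<le> q"
    and contraction: "\<And>e. e \<in> row_space A \<Longrightarrow>
      (norm e)^2 - (norm (A *v e))^2 / (frob_norm A)^2 \<le> q * (norm e)^2"
    and x: "x - z \<in> row_space A"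
  shows "rk_expect A b x k (\<lambda>x. (norm (x - z))^2)
    \<le> q^k * (norm (x - z))^2 + (\<Sum>j<k. q^j) * ((norm (b - A *v z))^2 / (frob_norm A)^2)"
  using x
proof (induction k arbitrary: x)
  case 0
  then show ?case by (simp add: rk_expect_0)
next
  case (Suc k)
  let ?p = "rk_prob A" and ?g = "\<lambda>x. (norm (x - z))^2"
    and ?c = "(norm (b - A *v z))^2 / (frob_norm A)^2"
  define C where "C = (\<Sum>j<k. q^j) * ?c"
  have "rk_expect A b x (Suc k) ?g = (\<Sum>i\<in>UNIV. ?p i * rk_expect A b (rk_step A b x i) k ?g)"
    by (rule rk_expect_Suc)
  also have "\<dots> \<le> (\<Sum>i\<in>UNIV. ?p i * (q^k * ?g (rk_step A b x i) + C))"
    using Suc.IH[OF rk_step_minus_in_row_space[OF Suc.prems]] unfolding C_def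
    by (intro sum_mono mult_left_mono) (auto simp: rk_prob_def)
  also have "\<dots> = q^k * (\<Sum>i\<in>UNIV. ?p i * ?g (rk_step A b x i)) + C * (\<Sum>i\<in>UNIV. ?p i)"
    by (simp add: algebra_simps sum.distrib sum_distrib_left)
  also have "\<dots> = q^k * ((?g x - (norm (A *v (x - z)))^2 / (frob_norm A)^2) + ?c) + C"
    by (simp add: expected_rk_step_error[OF rows] sum_rk_prob[OF rows] diff_divide_distrib)
  also have "\<dots> \<le> q^k * (q * ?g x + ?c) + C"
    using contraction[OF Suc.prems] q by (intro add_right_mono mult_left_mono) auto
  also have "\<dots> = q^Suc k * ?g x + (\<Sum>j<Suc k. q^j) * ?c"
    unfolding C_def by (simp add: algebra_simps add_divide_distrib)
  finally show ?case .
qed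

theorem rk_expect_error_bound:
  fixes A :: "real^'n^'m"
  assumes rows: "\<And>i. A $ i \<noteq> 0" and x0: "x0 - z \<in> row_space A"
  shows "rk_expect A b x0 k (\<lambda>x. (norm (x - z))^2)
     \<le> (1 - 1 / ((spec_norm (pinv A))^2 * (frob_norm A)^2)) ^ k * (norm (x0 - z))^2
       + (norm (b - A *v z))^2 / (sigma_min A)^2"
proof -
  let ?s = "spec_norm (pinv A)" and ?F = "frob_norm A" and ?r = "norm (b - A *v z)"
  define q where "q = 1 - 1 / (?s^2 * ?F^2)"
  have "1 \<le> ?s * ?F" using one_le_spec_norm_pinv_mult_frob_norm rows by blast
  then have "1 \<le> ?s^2 * ?F^2" by (metis one_le_power power_mult_distrib)
  then have q: "0 \<le> q" "q < 1" "1 - q = 1 / (?s^2 * ?F^2)" unfolding q_def by simp_all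
  have sigma: "sigma_min A > 0"
    using sigma_min_pos row_in_row_space rows by (metis singletonD)
  have "(\<Sum>j<k. q^j) * (?r^2 / ?F^2) \<le> 1 / (1 - q) * (?r^2 / ?F^2)"
  proof (rule mult_right_mono)
    show "(\<Sum>j<k. q^j) \<le> 1 / (1 - q)"
      using q(1,2) by (simp add: sum_gp_strict divide_right_mono)
  qed simp
  also have "\<dots> = ?s^2 * ?r^2"
    unfolding q(3) using frob_norm_power2_pos[OF rows] by simp
  also have "\<dots> \<le> ?r^2 / (sigma_min A)^2"
  proof -
    have "?s^2 \<le> (1 / sigma_min A)^2"
      using spec_norm_pinv_le[OF sigma] by (intro power_mono) (auto simp: spec_norm_def onorm_pos_le)
    from mult_right_mono[OF this, of "?r^2"] show ?thesis by (simp add: power_divide)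
  qed
  finally have "(\<Sum>j<k. q^j) * (?r^2 / ?F^2) \<le> ?r^2 / (sigma_min A)^2" .
  moreover have "rk_expect A b x0 k (\<lambda>x. (norm (x - z))^2)
      \<le> q^k * (norm (x0 - z))^2 + (\<Sum>j<k. q^j) * (?r^2 / ?F^2)"
    using rk_expect_le_geometric[OF rows q(1) row_space_contraction[of _ A, folded q_def] x0] .
  ultimately show ?thesis unfolding q_def by linarith
qed

theorem theorem3p1:
  fixes A E :: "real^'n^'m" and b eps :: "real^'m" and x0 :: "real^'n" and k :: nat
  defines "At \<equiv> A + E" and "bt \<equiv> b + eps" and "xLS \<equiv> pinv A *v b"
  assumes rows_nz: "\<And>i. At $ i \<noteq> 0"
    and consistent: "\<exists>x. A *v x = b"
    and start: "x0 - xLS \<in> range (\<lambda>y. transpose At *v y)"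
  shows "rk_expect At bt x0 k (\<lambda>x. (norm (x - xLS))^2)
     \<le> (1 - 1 / ((spec_norm (pinv At))^2 * (frob_norm At)^2)) ^ k * (norm (x0 - xLS))^2
       + (norm (E *v xLS - eps))^2 / (sigma_min At)^2"
proof -
  have "A *v xLS = b"
    using consistent mult_pinv_mult unfolding xLS_def by metis
  then have "bt - At *v xLS = - (E *v xLS - eps)"
    unfolding At_def bt_def by (simp add: matrix_vector_mult_add_rdistrib algebra_simps)
  then show ?thesis
    using rk_expect_error_bound[OF rows_nz start, of bt k] by (simp add: norm_minus_commute)
qed

end
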